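(* Let $G$ be a $2$-vertex-connected, unambiguously weighted rooted graph with positive edge weights and root edge $e=t_1t_2$, let $C_1,C_2,\dots$ be a greedy cycle sequence for $G$, and let $A_i$ be its $i$th ambit. Let $x$ be a point of $A_i$ (either a vertex of $A_i$, or a point interior to an edge of $A_i$, modeled by subdividing that edge into two edges of positive weight summing to the original weight). Then $A_i$ contains the shortest path in $G$ from $x$ to $t_1$ and the shortest path in $G$ from $x$ to $t_2$.
   Context: A rooted graph is an undirected graph with a designated root edge $e$; a cycle (connected $2$-regular subgraph) is rooted if it contains $e$. Edges have positive real weights; the weight of a path or cycle is the sum of its edge weights, and shortest means of minimum weight. $G$ is unambiguously weighted if no two distinct paths have the same weight and no two distinct cycles have the same weight. A greedy cycle sequence is a sequence of rooted cycles $C_1,C_2,\dots$ such that (1) each $C_i$ contains an edge that is not in any of $C_1,\dots,C_{i-1}$, and (2) subject to (1), each $C_i$ has minimum possible weight among rooted cycles. The $i$th ambit $A_i$ is the subgraph of $G$ formed by all vertices and edges of $C_1,\dots,C_i$. *)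

theory Defs
  imports Complex_Main
begin

text \<open>Simple graphs: vertex set V, edge set E of two-element vertex sets,
  edge weights w. A subgraph given by an edge set F has vertex set the union of F.\<close>

definition wf_graph :: "'v set \<Rightarrow> 'v set set \<Rightarrow> bool" where
  "wf_graph V E \<longleftrightarrow> finite V \<and> E \<subseteq> {{a, b} | a b. a \<in> V \<and> b \<in> V \<and> a \<noteq> b}"

definition adj :: "'v set \<Rightarrow> 'v set set \<Rightarrow> ('v \<times> 'v) set" where
  "adj V E = {(a, b). a \<in> V \<and> b \<in> V \<and> {a, b} \<in> E}"

definition connected_graph :: "'v set \<Rightarrow> 'v set set \<Rightarrow> bool" where
  "connected_graph V E \<longleftrightarrow> V \<noteq> {} \<and> (\<forall>u\<in>V. \<forall>v\<in>V. (u, v) \<in> (adj V E)\<^sup>*)"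

definition two_connected :: "'v set \<Rightarrow> 'v set set \<Rightarrow> bool" where
  "two_connected V E \<longleftrightarrow> card V \<ge> 3 \<and> connected_graph V E \<and>
     (\<forall>z\<in>V. connected_graph (V - {z}) {f \<in> E. z \<notin> f})"

definition path_edges :: "'v list \<Rightarrow> 'v set set" where
  "path_edges p = {{p ! i, p ! Suc i} | i. Suc i < length p}"

definition is_path :: "'v set \<Rightarrow> 'v set set \<Rightarrow> 'v list \<Rightarrow> bool" where
  "is_path V E p \<longleftrightarrow> p \<noteq> [] \<and> distinct p \<and> set p \<subseteq> V \<and> path_edges p \<subseteq> E"

definition is_cycle :: "'v set set \<Rightarrow> 'v set set \<Rightarrow> bool" where
  "is_cycle E C \<longleftrightarrow> (\<exists>vs. distinct vs \<and> length vs \<ge> 3 \<and>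
       C = path_edges vs \<union> {{last vs, hd vs}}) \<and> C \<subseteq> E"

definition weight :: "('v set \<Rightarrow> real) \<Rightarrow> 'v set set \<Rightarrow> real" where
  "weight w F = sum w F"

definition positive_weights :: "'v set set \<Rightarrow> ('v set \<Rightarrow> real) \<Rightarrow> bool" where
  "positive_weights E w \<longleftrightarrow> (\<forall>f\<in>E. w f > 0)"

definition unambiguous :: "'v set \<Rightarrow> 'v set set \<Rightarrow> ('v set \<Rightarrow> real) \<Rightarrow> bool" where
  "unambiguous V E w \<longleftrightarrow>
     (\<forall>p q. is_path V E p \<and> is_path V E q \<and> length p \<ge> 2 \<and> length q \<ge> 2 \<and>
            path_edges p \<noteq> path_edges q \<longrightarrow> weight w (path_edges p) \<noteq> weight w (path_edges q)) \<and>
     (\<forall>C D. is_cycle E C \<and> is_cycle E D \<and> C \<noteq> D \<longrightarrow> weight w C \<noteq> weight w D)"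

definition rooted_cycle :: "'v set set \<Rightarrow> 'v set \<Rightarrow> 'v set set \<Rightarrow> bool" where
  "rooted_cycle E e C \<longleftrightarrow> is_cycle E C \<and> e \<in> C"

text \<open>Greedy cycle sequence C_1, C_2, ... (list index i corresponds to C_(i+1)).\<close>
definition greedy_cycle_seq ::
  "'v set set \<Rightarrow> 'v set \<Rightarrow> ('v set \<Rightarrow> real) \<Rightarrow> 'v set set list \<Rightarrow> bool" where
  "greedy_cycle_seq E e w Cs \<longleftrightarrow>
     (\<forall>i < length Cs.
        rooted_cycle E e (Cs ! i) \<and> \<not> Cs ! i \<subseteq> \<Union>(set (take i Cs)) \<and>
        (\<forall>D. rooted_cycle E e D \<and> \<not> D \<subseteq> \<Union>(set (take i Cs)) \<longrightarrow>
             weight w (Cs ! i) \<le> weight w D))"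

text \<open>Edge set of the i-th ambit A_i; its vertex set is the union of this edge set.\<close>
definition ambit :: "'v set set list \<Rightarrow> nat \<Rightarrow> 'v set set" where
  "ambit Cs i = \<Union>(set (take i Cs))"

definition shortest_path ::
  "'v set \<Rightarrow> 'v set set \<Rightarrow> ('v set \<Rightarrow> real) \<Rightarrow> 'v \<Rightarrow> 'v \<Rightarrow> 'v list \<Rightarrow> bool" where
  "shortest_path V E w x y p \<longleftrightarrow> is_path V E p \<and> hd p = x \<and> last p = y \<and>
     (\<forall>q. is_path V E q \<and> hd q = x \<and> last q = y \<longrightarrow>
          weight w (path_edges p) \<le> weight w (path_edges q))"

definition path_in :: "'v list \<Rightarrow> 'v set set \<Rightarrow> bool" where
  "path_in p F \<longleftrightarrow> set p \<subseteq> \<Union>F \<and> path_edges p \<subseteq> F"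

definition subdiv_edges :: "'v set set \<Rightarrow> 'v \<Rightarrow> 'v \<Rightarrow> 'v \<Rightarrow> 'v set set" where
  "subdiv_edges F u v z = (F - {{u, v}}) \<union> {{u, z}, {z, v}}"

definition subdiv_weight ::
  "('v set \<Rightarrow> real) \<Rightarrow> 'v \<Rightarrow> 'v \<Rightarrow> 'v \<Rightarrow> real \<Rightarrow> 'v set \<Rightarrow> real" where
  "subdiv_weight w u v z a = w({u, z} := a, {z, v} := w {u, v} - a)"

end

theory Submission
  imports Defs
begin

text \<open>Let \<open>P\<close> be a path from a point of the ambit \<open>A\<^sub>i\<close> to an end of the root edge
  that leaves \<open>A\<^sub>i\<close>, first through an edge \<open>vu\<close> with \<open>v\<close> on an earlier cycle \<open>C\<^sub>j\<close>.
  Follow \<open>P\<close> from \<open>v\<close> until it first returns to \<open>C\<^sub>j\<close>, at \<open>y\<close>; this segment \<open>\<gamma>\<close> and the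
  arc of \<open>C\<^sub>j\<close> through the root edge form a rooted cycle \<open>D\<close> containing \<open>vu\<close>, so \<open>D\<close> is
  not contained in \<open>A\<^sub>j\<^sub>+\<^sub>1\<close>. Greedy choice and unambiguity give \<open>w(C\<^sub>j) < w(D)\<close>, that is,
  the other arc \<open>\<sigma>\<close> of \<open>C\<^sub>j\<close> between \<open>v\<close> and \<open>y\<close> is lighter than \<open>\<gamma>\<close>, and replacing \<open>\<gamma>\<close>
  by \<open>\<sigma>\<close> shortens \<open>P\<close>. For a subdivision vertex \<open>z\<close> of an ambit edge \<open>uv\<close>, a shortest
  path from \<open>z\<close> continues as a path of the original graph from \<open>u\<close> (or \<open>v\<close>); if that
  left the ambit, the shortened path, entered from \<open>z\<close>, would beat it.\<close>

lemma path_edges_conv_zip: "path_edges xs = (\<lambda>(a, b). {a, b}) ` set (zip xs (tl xs))"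
  unfolding path_edges_def set_zip by (force simp: nth_tl image_iff)

lemma path_edges_simps [simp]:
  "path_edges [] = {}"
  "path_edges [a] = {}"
  "path_edges (a # b # xs) = insert {a, b} (path_edges (b # xs))"
  by (simp_all add: path_edges_conv_zip)

lemma finite_path_edges [simp]: "finite (path_edges xs)"
  by (simp add: path_edges_conv_zip)

lemma path_edges_Cons: "xs \<noteq> [] \<Longrightarrow> path_edges (a # xs) = insert {a, hd xs} (path_edges xs)"
  by (cases xs) auto

lemma path_edges_append:
  "xs \<noteq> [] \<Longrightarrow> ys \<noteq> [] \<Longrightarrow>
   path_edges (xs @ ys) = path_edges xs \<union> path_edges ys \<union> {{last xs, hd ys}}"
  by (induction xs rule: induct_list012) (auto simp: path_edges_Cons)

lemma path_edges_append_Cons: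
  "path_edges (xs @ y # ys) = path_edges (xs @ [y]) \<union> path_edges (y # ys)"
  by (cases "xs = []") (auto simp: path_edges_append)

lemma path_edges_split3:
  "path_edges (xs @ a # ys @ b # zs) =
   path_edges (xs @ [a]) \<union> path_edges (a # ys @ [b]) \<union> path_edges (b # zs)"
  using path_edges_append_Cons[of xs a "ys @ b # zs"] path_edges_append_Cons[of "a # ys" b zs]
  by auto

lemma path_edges_rev [simp]: "path_edges (rev xs) = path_edges xs"
proof (induction xs)
  case (Cons x xs)
  then show ?case
    by (cases "xs = []") (auto simp: path_edges_append path_edges_Cons last_rev insert_commute)
qed simp

lemma path_edge_subset_set: "f \<in> path_edges xs \<Longrightarrow> f \<subseteq> set xs"
  by (auto simp: path_edges_def)

lemma card_path_edge: "distinct xs \<Longrightarrow> f \<in> path_edges xs \<Longrightarrow> card f = 2"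
  by (auto simp: path_edges_def nth_eq_iff_index_eq)

lemma set_subset_Union_path_edges: "2 \<le> length xs \<Longrightarrow> set xs \<subseteq> \<Union>(path_edges xs)"
proof (induction xs rule: induct_list012)
  case (3 x y zs)
  then show ?case by (cases zs) auto
qed auto

lemma path_edges_disjoint:
  assumes "distinct xs" "set xs \<inter> set ys \<subseteq> {c}"
  shows "path_edges xs \<inter> path_edges ys = {}"
proof -
  have "card f \<le> 1" if "f \<in> path_edges xs" "f \<in> path_edges ys" for f
    using that assms path_edge_subset_set[of f] card_mono[of "{c}" f] by fastforce
  then show ?thesis using card_path_edge[OF assms(1)] by fastforce
qed

lemma path_edge_split: "f \<in> path_edges xs \<Longrightarrow> \<exists>ys a b zs. xs = ys @ a # b # zs \<and> f = {a, b}"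
proof (induction xs rule: induct_list012)
  case (3 x y zs)
  show ?case
  proof (cases "f = {x, y}")
    case True
    then show ?thesis by (intro exI[of _ "[]"]) auto
  next
    case False
    then obtain ys a b zs' where "y # zs = ys @ a # b # zs'" "f = {a, b}" using 3 by auto
    then show ?thesis by (intro exI[of _ "x # ys"]) auto
  qed
qed auto

lemma walk_contains_path:
  "xs \<noteq> [] \<Longrightarrow> \<exists>ys. ys \<noteq> [] \<and> distinct ys \<and> hd ys = hd xs \<and> last ys = last xs \<and>
     set ys \<subseteq> set xs \<and> path_edges ys \<subseteq> path_edges xs"
proof (induction "length xs" arbitrary: xs rule: less_induct)
  case less
  show ?case
  proof (cases "distinct xs")
    case False
    then obtain as y bs cs where xs: "xs = as @ [y] @ bs @ [y] @ cs"
      using not_distinct_decomp by blast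
    define xs' where "xs' = as @ y # cs"
    have "hd xs' = hd xs" "last xs' = last xs" "set xs' \<subseteq> set xs"
      using xs by (cases as; cases cs; auto simp: xs'_def)+
    moreover have "path_edges xs' \<subseteq> path_edges xs"
      using xs path_edges_split3[of as y bs y cs] path_edges_append_Cons[of as y cs]
      by (auto simp: xs'_def)
    moreover obtain ys where "ys \<noteq> []" "distinct ys" "hd ys = hd xs'" "last ys = last xs'"
      "set ys \<subseteq> set xs'" "path_edges ys \<subseteq> path_edges xs'"
      using less(1)[of xs'] xs by (auto simp: xs'_def)
    ultimately show ?thesis by (intro exI[of _ ys]) auto
  qed (use less.prems in auto)
qed

lemma path_edges_exit:
  "\<not> path_edges xs \<subseteq> A \<Longrightarrow> hd xs \<in> \<Union>A \<Longrightarrow>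
   \<exists>ys v u zs. xs = ys @ v # u # zs \<and> v \<in> \<Union>A \<and> {v, u} \<notin> A"
proof (induction xs rule: induct_list012)
  case (3 x y zs)
  show ?case
  proof (cases "{x, y} \<in> A")
    case True
    with "3.prems"(1) have "\<not> path_edges (y # zs) \<subseteq> A" by simp
    moreover have "hd (y # zs) \<in> \<Union>A" using True by auto
    ultimately obtain ys v u zs' where "y # zs = ys @ v # u # zs'" "v \<in> \<Union>A" "{v, u} \<notin> A"
      using "3.IH"(2) by blast
    then show ?thesis by (intro exI[of _ "x # ys"]) auto
  qed (use "3.prems" in \<open>intro exI[of _ "[]"], auto\<close>)
qed auto

lemma split_list_pair:
  assumes "a \<in> set xs" "b \<in> set xs" "a \<noteq> b"
  shows "\<exists>ys zs us. xs = ys @ a # zs @ b # us \<or> xs = ys @ b # zs @ a # us"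
proof -
  obtain ys zs where xs: "xs = ys @ a # zs" using assms(1) split_list by fastforce
  show ?thesis
  proof (cases "b \<in> set ys")
    case True
    then obtain ys' zs' where "ys = ys' @ b # zs'" using split_list by fastforce
    then show ?thesis using xs by auto
  next
    case False
    then obtain ys' zs' where "zs = ys' @ b # zs'" using assms xs split_list by fastforce
    then show ?thesis using xs by auto
  qed
qed

definition cycle_edges :: "'v list \<Rightarrow> 'v set set" where
  "cycle_edges vs = path_edges vs \<union> {{last vs, hd vs}}"

lemma is_cycle_iff:
  "is_cycle E C \<longleftrightarrow> (\<exists>vs. distinct vs \<and> 3 \<le> length vs \<and> C = cycle_edges vs) \<and> C \<subseteq> E"
  by (simp add: is_cycle_def cycle_edges_def)

lemma cycle_edges_rotate:
  "xs \<noteq> [] \<Longrightarrow> ys \<noteq> [] \<Longrightarrow> cycle_edges (xs @ ys) = cycle_edges (ys @ xs)"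
  by (auto simp: cycle_edges_def path_edges_append)

lemma cycle_edges_rev [simp]: "cycle_edges (rev xs) = cycle_edges xs"
  by (simp add: cycle_edges_def hd_rev last_rev insert_commute)

lemma Union_cycle_edges: "3 \<le> length xs \<Longrightarrow> \<Union>(cycle_edges xs) = set xs"
  using set_subset_Union_path_edges[of xs] path_edge_subset_set[of _ xs]
  by (cases xs) (auto simp: cycle_edges_def)

lemma closing_edge_notin_path_edges:
  assumes "distinct xs" "3 \<le> length xs"
  shows "{last xs, hd xs} \<notin> path_edges xs"
proof
  obtain a m b where xs: "xs = a # m @ [b]" "m \<noteq> []"
    using assms(2) by (cases xs rule: rev_cases; cases "butlast xs") (auto simp: Suc_le_eq)
  assume "{last xs, hd xs} \<in> path_edges xs"
  then have "{b, a} = {a, hd m} \<or> {b, a} \<in> path_edges (m @ [b])"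
    using xs by (simp add: path_edges_Cons)
  then show False
    using assms(1) xs hd_in_set[of m] path_edge_subset_set[of "{b, a}" "m @ [b]"]
    by (auto simp: doubleton_eq_iff)
qed

lemma weight_cycle_edges:
  "distinct xs \<Longrightarrow> 3 \<le> length xs \<Longrightarrow>
   weight w (cycle_edges xs) = w {last xs, hd xs} + weight w (path_edges xs)"
  by (simp add: cycle_edges_def weight_def closing_edge_notin_path_edges)

lemma rooted_cycle_closed_by_root:
  assumes "rooted_cycle E e C"
  obtains vs where "distinct vs" "3 \<le> length vs" "C = cycle_edges vs" "{last vs, hd vs} = e"
proof -
  obtain vs where vs: "distinct vs" "3 \<le> length vs" "C = cycle_edges vs" "e \<in> C"
    using assms by (auto simp: rooted_cycle_def is_cycle_iff)
  show thesis
  proof (cases "e = {last vs, hd vs}")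
    case False
    then have "e \<in> path_edges vs" using vs by (auto simp: cycle_edges_def)
    then obtain ys a b zs where vs_eq: "vs = ys @ a # b # zs" and e: "e = {a, b}"
      using path_edge_split by blast
    let ?vs = "(b # zs) @ ys @ [a]"
    have "C = cycle_edges ?vs"
      using vs(3) cycle_edges_rotate[of "ys @ [a]" "b # zs"] by (simp add: vs_eq)
    moreover have "{last ?vs, hd ?vs} = e" using e by (simp add: insert_commute)
    ultimately show thesis using that[of ?vs] vs by (auto simp: vs_eq)
  qed (use that vs in auto)
qed

lemma rooted_cycle_through:
  assumes "rooted_cycle E e C" "v \<in> \<Union>C" "y \<in> \<Union>C" "v \<noteq> y"
  obtains vs l1 l2 l3 where "distinct vs" "3 \<le> length vs" "C = cycle_edges vs"
    "{last vs, hd vs} = e" "vs = l1 @ v # l2 @ y # l3"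
proof -
  obtain vs where vs: "distinct vs" "3 \<le> length vs" "C = cycle_edges vs" "{last vs, hd vs} = e"
    using rooted_cycle_closed_by_root[OF assms(1)] .
  then have "v \<in> set vs" "y \<in> set vs" using assms(2,3) Union_cycle_edges by auto
  then obtain l1 l2 l3 where "vs = l1 @ v # l2 @ y # l3 \<or> rev vs = rev l3 @ v # rev l2 @ y # rev l1"
    using split_list_pair[of v vs y] assms(4) by force
  then show thesis
  proof
    assume split: "rev vs = rev l3 @ v # rev l2 @ y # rev l1"
    have "{last (rev vs), hd (rev vs)} = e"
      using vs by (cases vs) (auto simp: insert_commute hd_rev)
    moreover have "distinct (rev vs)" "3 \<le> length (rev vs)" "C = cycle_edges (rev vs)"
      using vs by simp_all
    ultimately show thesis using that split by blast
  qed (use that vs in blast)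
qed

lemma weight_Un_le:
  fixes w :: "'a set \<Rightarrow> real"
  assumes "finite A" "finite B" "\<forall>f \<in> A \<union> B. 0 \<le> w f"
  shows "weight w (A \<union> B) \<le> weight w A + weight w B"
  using assms sum_Un[of A B w] sum_nonneg[of "A \<inter> B" w] by (simp add: weight_def)

lemma weight_path_edges_split3:
  assumes "distinct (xs @ a # ys @ b # zs)"
  shows "weight w (path_edges (xs @ a # ys @ b # zs)) =
    weight w (path_edges (xs @ [a])) + weight w (path_edges (a # ys @ [b])) + weight w (path_edges (b # zs))"
proof -
  have "path_edges (xs @ [a]) \<inter> path_edges (a # ys @ [b]) = {}"
    using assms by (intro path_edges_disjoint[where c = a]) auto
  moreover have "path_edges (xs @ a # ys @ [b]) \<inter> path_edges (b # zs) = {}"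
    using assms by (intro path_edges_disjoint[where c = b]) auto
  ultimately show ?thesis
    using path_edges_append_Cons[of xs a "ys @ [b]"] path_edges_split3[of xs a ys b zs]
    by (simp add: weight_def sum.union_disjoint Int_Un_distrib2)
qed

lemma weight_path_edges_split3_le:
  fixes w :: "'a set \<Rightarrow> real"
  assumes "\<forall>f \<in> path_edges (xs @ a # ys @ b # zs). 0 \<le> w f"
  shows "weight w (path_edges (xs @ a # ys @ b # zs)) \<le>
    weight w (path_edges (xs @ [a])) + weight w (path_edges (a # ys @ [b])) + weight w (path_edges (b # zs))"
  using assms path_edges_split3[of xs a ys b zs]
    weight_Un_le[of "path_edges (xs @ [a]) \<union> path_edges (a # ys @ [b])" "path_edges (b # zs)" w]
    weight_Un_le[of "path_edges (xs @ [a])" "path_edges (a # ys @ [b])" w]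
  by auto

lemma weight_cycle_reroute:
  assumes "distinct (l1 @ v # l2 @ y # l3)" "3 \<le> length (l1 @ v # l2 @ y # l3)"
    "distinct (l1 @ v # g @ y # l3)" "3 \<le> length (l1 @ v # g @ y # l3)"
  shows "weight w (cycle_edges (l1 @ v # g @ y # l3)) - weight w (path_edges (v # g @ [y])) =
    weight w (cycle_edges (l1 @ v # l2 @ y # l3)) - weight w (path_edges (v # l2 @ [y]))"
proof -
  have "hd (l1 @ v # g @ y # l3) = hd (l1 @ v # l2 @ y # l3)" by (cases l1) auto
  moreover have "last (l1 @ v # g @ y # l3) = last (l1 @ v # l2 @ y # l3)" by (cases l3) auto
  ultimately show ?thesis
    using assms by (simp add: weight_cycle_edges weight_path_edges_split3)
qed

lemma path_reroute:
  fixes w :: "'a set \<Rightarrow> real"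
  assumes nonneg: "\<forall>f \<in> E. 0 \<le> w f"
    and P: "is_path V E (p1 @ v # g @ y # p3)"
    and s: "set s \<subseteq> V" "path_edges (v # s @ [y]) \<subseteq> E"
    and lighter: "weight w (path_edges (v # s @ [y])) < weight w (path_edges (v # g @ [y]))"
  shows "\<exists>P'. is_path V E P' \<and> hd P' = hd (p1 @ v # g @ y # p3) \<and> last P' = last (p1 @ v # g @ y # p3) \<and>
    weight w (path_edges P') < weight w (path_edges (p1 @ v # g @ y # p3))"
proof -
  define W where "W = p1 @ v # s @ y # p3"
  have WE: "path_edges W \<subseteq> E"
    using P s path_edges_split3[of p1 v s y p3] path_edges_split3[of p1 v g y p3]
    by (auto simp: W_def is_path_def)
  obtain P' where P': "P' \<noteq> []" "distinct P'" "hd P' = hd W" "last P' = last W"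
    "set P' \<subseteq> set W" "path_edges P' \<subseteq> path_edges W"
    using walk_contains_path[of W] by (auto simp: W_def)
  have "weight w (path_edges P') \<le> weight w (path_edges W)"
    unfolding weight_def using P'(6) WE nonneg by (intro sum_mono2) auto
  also have "\<dots> \<le> weight w (path_edges (p1 @ [v])) + weight w (path_edges (v # s @ [y])) + weight w (path_edges (y # p3))"
    unfolding W_def using WE nonneg by (intro weight_path_edges_split3_le) (auto simp: W_def)
  also have "\<dots> < weight w (path_edges (p1 @ v # g @ y # p3))"
    using P lighter by (simp add: is_path_def weight_path_edges_split3)
  finally have "weight w (path_edges P') < weight w (path_edges (p1 @ v # g @ y # p3))" .
  moreover have "is_path V E P'" using P P' s WE by (auto simp: is_path_def W_def)
  moreover have "hd P' = hd (p1 @ v # g @ y # p3)"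
    using P'(3) by (cases p1) (simp_all add: W_def)
  moreover have "last P' = last (p1 @ v # g @ y # p3)"
    using P'(4) by (cases p3) (simp_all add: W_def)
  ultimately show ?thesis by blast
qed

lemma ambit_mono: "j \<le> i \<Longrightarrow> ambit Cs j \<subseteq> ambit Cs i"
  unfolding ambit_def by (intro Union_mono set_take_subset_set_take)

lemma nth_subset_ambit: "j < i \<Longrightarrow> j < length Cs \<Longrightarrow> Cs ! j \<subseteq> ambit Cs i"
  unfolding ambit_def by (auto simp: in_set_conv_nth intro!: exI[of _ j])

lemma vertex_of_ambit:
  assumes "x \<in> \<Union>(ambit Cs i)"
  obtains j where "j < i" "j < length Cs" "x \<in> \<Union>(Cs ! j)"
proof -
  obtain C where C: "x \<in> \<Union>C" "C \<in> set (take i Cs)" using assms unfolding ambit_def by blast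
  then obtain j where "j < length (take i Cs)" "C = take i Cs ! j" by (auto simp: in_set_conv_nth)
  then show thesis using C(1) by (intro that[of j]) auto
qed

lemma greedy_cycle_rooted:
  "greedy_cycle_seq E e w Cs \<Longrightarrow> j < length Cs \<Longrightarrow> rooted_cycle E e (Cs ! j)"
  by (simp add: greedy_cycle_seq_def)

lemma greedy_cycle_minimal:
  "greedy_cycle_seq E e w Cs \<Longrightarrow> j < length Cs \<Longrightarrow> rooted_cycle E e D \<Longrightarrow>
   \<not> D \<subseteq> ambit Cs j \<Longrightarrow> weight w (Cs ! j) \<le> weight w D"
  by (simp add: greedy_cycle_seq_def ambit_def)

lemma unambiguous_cycle_weight:
  "unambiguous V E w \<Longrightarrow> is_cycle E C \<Longrightarrow> is_cycle E D \<Longrightarrow> C \<noteq> D \<Longrightarrow> weight w C \<noteq> weight w D"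
  by (simp add: unambiguous_def)

lemma ambit_subset_edges:
  assumes "greedy_cycle_seq E e w Cs"
  shows "ambit Cs i \<subseteq> E"
proof
  fix f assume "f \<in> ambit Cs i"
  then obtain j where "j < length Cs" "f \<in> Cs ! j" unfolding ambit_def by (auto simp: in_set_conv_nth)
  moreover from this have "Cs ! j \<subseteq> E"
    using greedy_cycle_rooted[OF assms] unfolding rooted_cycle_def is_cycle_def by blast
  ultimately show "f \<in> E" by blast
qed

lemma greedy_cycle_lighter:
  assumes greedy: "greedy_cycle_seq E e w Cs" and unam: "unambiguous V E w"
    and j: "j < length Cs" and D: "rooted_cycle E e D" "\<not> D \<subseteq> ambit Cs (Suc j)"
  shows "weight w (Cs ! j) < weight w D"
proof -
  have "\<not> D \<subseteq> ambit Cs j" using D(2) ambit_mono[of j "Suc j" Cs] by auto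
  then have "weight w (Cs ! j) \<le> weight w D"
    using greedy_cycle_minimal[OF greedy j D(1)] by blast
  moreover have "D \<noteq> Cs ! j" using D(2) nth_subset_ambit[of j "Suc j" Cs] j by auto
  then have "weight w (Cs ! j) \<noteq> weight w D"
    using unambiguous_cycle_weight[OF unam] D(1) greedy_cycle_rooted[OF greedy j]
    by (simp add: rooted_cycle_def)
  ultimately show ?thesis by linarith
qed

lemma rooted_cycle_reroute:
  assumes C: "rooted_cycle E e (cycle_edges \<rho>)" "{last \<rho>, hd \<rho>} = e"
    and \<rho>: "\<rho> = l1 @ v # l2 @ y # l3" "distinct \<rho>"
    and seg: "distinct (v # g @ [y])" "set g \<inter> set \<rho> = {}" "path_edges (v # g @ [y]) \<subseteq> E"
    and len: "3 \<le> length (l1 @ v # g @ y # l3)"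
  shows "rooted_cycle E e (cycle_edges (l1 @ v # g @ y # l3))"
proof -
  let ?\<delta> = "l1 @ v # g @ y # l3"
  have "distinct ?\<delta>" using \<rho> seg by auto
  moreover have "hd ?\<delta> = hd \<rho>" "last ?\<delta> = last \<rho>"
    unfolding \<rho>(1) by (cases l1; simp) (cases l3; simp)
  moreover have "cycle_edges \<rho> \<subseteq> E" using C(1) by (simp add: rooted_cycle_def is_cycle_def)
  then have "cycle_edges ?\<delta> \<subseteq> E"
    using seg(3) \<rho>(1) \<open>hd ?\<delta> = hd \<rho>\<close> \<open>last ?\<delta> = last \<rho>\<close>
      path_edges_split3[of l1 v g y l3] path_edges_split3[of l1 v l2 y l3]
    by (auto simp: cycle_edges_def)
  ultimately show ?thesis
    using len C(2) unfolding rooted_cycle_def is_cycle_iff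
    by (intro conjI exI[of _ ?\<delta>]) (auto simp: cycle_edges_def)
qed

lemma path_exit_through_cycle:
  assumes greedy: "greedy_cycle_seq E e w Cs"
    and P: "distinct P" "hd P \<in> \<Union>(ambit Cs i)" "last P \<in> e" "\<not> path_edges P \<subseteq> ambit Cs i"
  obtains j \<rho> l1 l2 l3 p1 v g y p3 where "j < i" "j < length Cs"
    "distinct \<rho>" "3 \<le> length \<rho>" "Cs ! j = cycle_edges \<rho>" "{last \<rho>, hd \<rho>} = e"
    "\<rho> = l1 @ v # l2 @ y # l3" "P = p1 @ v # g @ y # p3" "set g \<inter> set \<rho> = {}"
    "{v, hd (g @ [y])} \<notin> ambit Cs i"
proof -
  obtain p1 v u r where P_eq: "P = p1 @ v # u # r" and v: "v \<in> \<Union>(ambit Cs i)"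
    and exit: "{v, u} \<notin> ambit Cs i"
    using path_edges_exit[OF P(4,2)] by blast
  obtain j where j: "j < i" "j < length Cs" "v \<in> \<Union>(Cs ! j)"
    using vertex_of_ambit[OF v] by blast
  have C: "rooted_cycle E e (Cs ! j)" using greedy_cycle_rooted[OF greedy j(2)] .
  have "last (u # r) \<in> \<Union>(Cs ! j)"
    using P(3) C P_eq by (auto simp: rooted_cycle_def)
  then have "\<exists>x \<in> set (u # r). x \<in> \<Union>(Cs ! j)" by (intro bexI[of _ "last (u # r)"]) auto
  then obtain g y p3 where ur: "u # r = g @ y # p3" "y \<in> \<Union>(Cs ! j)" "\<forall>x \<in> set g. x \<notin> \<Union>(Cs ! j)"
    by (rule split_list_first_propE)
  have "v \<noteq> y" using P(1) P_eq ur(1) by auto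
  then obtain \<rho> l1 l2 l3 where \<rho>: "distinct \<rho>" "3 \<le> length \<rho>" "Cs ! j = cycle_edges \<rho>"
      "{last \<rho>, hd \<rho>} = e" "\<rho> = l1 @ v # l2 @ y # l3"
    using rooted_cycle_through[OF C j(3) ur(2)] by blast
  moreover have "set g \<inter> set \<rho> = {}" using ur(3) \<rho>(2,3) Union_cycle_edges[of \<rho>] by auto
  moreover have "hd (g @ [y]) = u" using ur(1) by (cases g) auto
  ultimately show thesis
    using that[of j \<rho> l1 v l2 y l3 p1 g p3] j(1,2) P_eq ur(1) exit by auto
qed

lemma wf_graph_edge: "wf_graph V E \<Longrightarrow> {u, v} \<in> E \<Longrightarrow> u \<in> V \<and> v \<in> V \<and> u \<noteq> v"
  by (auto simp: wf_graph_def doubleton_eq_iff)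

lemma vertices_subset_of_edges: "wf_graph V E \<Longrightarrow> F \<subseteq> E \<Longrightarrow> \<Union>F \<subseteq> V"
  by (auto simp: wf_graph_def)

lemma positive_weights_nonneg: "positive_weights E w \<Longrightarrow> \<forall>f \<in> E. 0 \<le> w f"
  by (simp add: positive_weights_def less_imp_le)

lemma greedy_segment_lighter:
  assumes greedy: "greedy_cycle_seq E e w Cs" and unam: "unambiguous V E w"
    and j: "j < i" "j < length Cs"
    and \<rho>: "distinct \<rho>" "3 \<le> length \<rho>" "Cs ! j = cycle_edges \<rho>" "{last \<rho>, hd \<rho>} = e"
      "\<rho> = l1 @ v # l2 @ y # l3"
    and seg: "distinct (v # g @ [y])" "set g \<inter> set \<rho> = {}" "path_edges (v # g @ [y]) \<subseteq> E"
    and exit: "{v, hd (g @ [y])} \<notin> ambit Cs i"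
  shows "weight w (path_edges (v # l2 @ [y])) < weight w (path_edges (v # g @ [y]))"
proof -
  let ?\<delta> = "l1 @ v # g @ y # l3"
  have C: "rooted_cycle E e (cycle_edges \<rho>)" using greedy_cycle_rooted[OF greedy j(2)] \<rho>(3) by simp
  have "3 \<le> length ?\<delta>"
  proof (rule ccontr)
    assume "\<not> 3 \<le> length ?\<delta>"
    then have "l1 = []" "g = []" "l3 = []" by (simp_all add: Suc_le_eq)
    then have "{v, hd (g @ [y])} = e" using \<rho>(4,5) by (simp add: insert_commute)
    then show False using exit C nth_subset_ambit[OF j] \<rho>(3) by (auto simp: rooted_cycle_def)
  qed
  then have D: "rooted_cycle E e (cycle_edges ?\<delta>)"
    using rooted_cycle_reroute[OF C \<rho>(4,5,1) seg] by blast
  have "{v, hd (g @ [y])} \<in> path_edges (v # g @ [y])" by (cases g) auto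
  then have "{v, hd (g @ [y])} \<in> cycle_edges ?\<delta>"
    using path_edges_split3[of l1 v g y l3] by (auto simp: cycle_edges_def)
  then have "\<not> cycle_edges ?\<delta> \<subseteq> ambit Cs (Suc j)"
    using exit ambit_mono[of "Suc j" i Cs] j(1) by auto
  then have "weight w (cycle_edges \<rho>) < weight w (cycle_edges ?\<delta>)"
    using greedy_cycle_lighter[OF greedy unam j(2) D] \<rho>(3) by simp
  moreover have "distinct ?\<delta>" using \<rho>(1,5) seg(1,2) by auto
  ultimately show ?thesis
    using weight_cycle_reroute[of l1 v l2 y l3 g w] \<rho>(1,2,5) \<open>3 \<le> length ?\<delta>\<close> by simp
qed

lemma path_leaving_ambit_shortcut:
  fixes w :: "'v set \<Rightarrow> real"
  assumes wf: "wf_graph V E" and pos: "positive_weights E w" and unam: "unambiguous V E w"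
    and greedy: "greedy_cycle_seq E e w Cs"
    and P: "is_path V E P" "hd P \<in> \<Union>(ambit Cs i)" "last P \<in> e" "\<not> path_edges P \<subseteq> ambit Cs i"
  shows "\<exists>P'. is_path V E P' \<and> hd P' = hd P \<and> last P' = last P \<and>
    weight w (path_edges P') < weight w (path_edges P)"
proof -
  have "distinct P" using P(1) by (simp add: is_path_def)
  then obtain j \<rho> l1 l2 l3 p1 v g y p3 where j: "j < i" "j < length Cs"
    and \<rho>: "distinct \<rho>" "3 \<le> length \<rho>" "Cs ! j = cycle_edges \<rho>" "{last \<rho>, hd \<rho>} = e"
      "\<rho> = l1 @ v # l2 @ y # l3"
    and P_eq: "P = p1 @ v # g @ y # p3" and disj: "set g \<inter> set \<rho> = {}"
    and exit: "{v, hd (g @ [y])} \<notin> ambit Cs i"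
    by (rule path_exit_through_cycle[OF greedy _ P(2-4)])
  have seg: "distinct (v # g @ [y])" "path_edges (v # g @ [y]) \<subseteq> E"
    using P(1) path_edges_split3[of p1 v g y p3] by (auto simp: P_eq is_path_def)
  have lighter: "weight w (path_edges (v # l2 @ [y])) < weight w (path_edges (v # g @ [y]))"
    using greedy_segment_lighter[OF greedy unam j \<rho> seg(1) disj seg(2) exit] .
  have CE: "cycle_edges \<rho> \<subseteq> E"
    using greedy_cycle_rooted[OF greedy j(2)] \<rho>(3) by (simp add: rooted_cycle_def is_cycle_def)
  then have "set \<rho> \<subseteq> V"
    using vertices_subset_of_edges[OF wf] Union_cycle_edges[OF \<rho>(2)] by metis
  then have "set l2 \<subseteq> V" using \<rho>(5) by auto
  moreover have "path_edges (v # l2 @ [y]) \<subseteq> E"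
    using CE path_edges_split3[of l1 v l2 y l3] \<rho>(5) by (auto simp: cycle_edges_def)
  ultimately show ?thesis
    using path_reroute[OF positive_weights_nonneg[OF pos] P(1)[unfolded P_eq] _ _ lighter]
    by (simp add: P_eq)
qed

lemma path_in_intro:
  assumes "path_edges p \<subseteq> F" "hd p \<in> \<Union>F"
  shows "path_in p F"
proof (cases "2 \<le> length p")
  case True
  then have "set p \<subseteq> \<Union>F" using assms(1) set_subset_Union_path_edges[of p] by blast
  then show ?thesis using assms(1) by (simp add: path_in_def)
next
  case False
  then have "set p \<subseteq> {hd p}" by (cases p) (auto simp: Suc_le_eq)
  then show ?thesis using assms by (auto simp: path_in_def)
qed

lemma shortest_path_in_ambit:
  assumes wf: "wf_graph V E" and pos: "positive_weights E w" and unam: "unambiguous V E w"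
    and greedy: "greedy_cycle_seq E e w Cs"
    and x: "x \<in> \<Union>(ambit Cs i)" and t: "t \<in> e" and p: "shortest_path V E w x t p"
  shows "path_in p (ambit Cs i)"
proof -
  have "path_edges p \<subseteq> ambit Cs i"
  proof (rule ccontr)
    assume "\<not> path_edges p \<subseteq> ambit Cs i"
    then obtain P' where "is_path V E P'" "hd P' = x" "last P' = t"
      "weight w (path_edges P') < weight w (path_edges p)"
      using path_leaving_ambit_shortcut[OF wf pos unam greedy, of p i] p x t
      by (auto simp: shortest_path_def)
    then show False using p by (force simp: shortest_path_def)
  qed
  then show ?thesis using p x by (intro path_in_intro) (auto simp: shortest_path_def)
qed

lemma subdiv_edges_swap: "subdiv_edges E v u z = subdiv_edges E u v z"
  by (auto simp: subdiv_edges_def insert_commute)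

lemma subdiv_weight_swap:
  "u \<noteq> v \<Longrightarrow> subdiv_weight w v u z (w {u, v} - a) = subdiv_weight w u v z a"
  by (auto simp: subdiv_weight_def insert_commute doubleton_eq_iff fun_eq_iff)

context
  fixes V :: "'v set" and E :: "'v set set" and u v z :: 'v
  assumes wf: "wf_graph V E" and uv: "{u, v} \<in> E" and z: "z \<notin> V"
begin

lemma new_vertex_notin_edge: "f \<in> E \<Longrightarrow> z \<notin> f"
  using wf z by (auto simp: wf_graph_def)

lemma subdiv_weight_old: "f \<in> E \<Longrightarrow> subdiv_weight w u v z a f = w f"
  using new_vertex_notin_edge[of f] by (auto simp: subdiv_weight_def)

lemma weight_subdiv_old: "F \<subseteq> E \<Longrightarrow> weight (subdiv_weight w u v z a) F = weight w F"
  unfolding weight_def using subdiv_weight_old by (meson subsetD sum.cong)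

lemma subdiv_weight_new:
  "subdiv_weight w u v z a {z, u} = a" "subdiv_weight w u v z a {z, v} = w {u, v} - a"
  using wf uv by (auto simp: subdiv_weight_def wf_graph_def doubleton_eq_iff insert_commute)

lemma subdiv_path_start:
  assumes "is_path (insert z V) (subdiv_edges E u v z) p" "hd p = z" "last p \<in> V"
  obtains c r where "p = z # c # r" "c = u \<or> c = v"
proof -
  obtain c r where p: "p = z # c # r"
    using assms z by (cases p; cases "tl p") (auto simp: is_path_def split: if_splits)
  then have "{z, c} \<in> subdiv_edges E u v z" using assms(1) by (simp add: is_path_def)
  moreover have "{z, c} \<notin> E" using new_vertex_notin_edge by blast
  ultimately have "c = u \<or> c = v" by (auto simp: subdiv_edges_def doubleton_eq_iff)
  then show thesis using that p by blast
qed

lemma subdiv_path_restrict: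
  assumes "is_path (insert z V) (subdiv_edges E u v z) (z # u # r)"
  shows "is_path V E (u # r)" "path_edges (u # r) \<subseteq> E - {{u, v}}"
    "weight (subdiv_weight w u v z a) (path_edges (z # u # r)) = a + weight w (path_edges (u # r))"
proof -
  have "z \<notin> set (u # r)" using assms by (simp add: is_path_def)
  then have "z \<notin> f" if "f \<in> path_edges (u # r)" for f
    using path_edge_subset_set[OF that] by blast
  then show edges: "path_edges (u # r) \<subseteq> E - {{u, v}}"
    using assms by (auto simp: is_path_def subdiv_edges_def)
  then show "is_path V E (u # r)" using assms by (auto simp: is_path_def)
  have "{z, u} \<notin> path_edges (u # r)" using edges new_vertex_notin_edge by blast
  then show "weight (subdiv_weight w u v z a) (path_edges (z # u # r)) = a + weight w (path_edges (u # r))"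
    using weight_subdiv_old[of "path_edges (u # r)" w a] edges subdiv_weight_new(1)[of w a]
    by (auto simp: weight_def)
qed

lemma subdiv_path_prepend:
  assumes P: "is_path V E P" "hd P \<in> {u, v}" "{u, v} \<notin> path_edges P"
  shows "is_path (insert z V) (subdiv_edges E u v z) (z # P)"
    and "weight (subdiv_weight w u v z a) (path_edges (z # P)) =
     subdiv_weight w u v z a {z, hd P} + weight w (path_edges P)"
proof -
  have edges: "path_edges (z # P) = insert {z, hd P} (path_edges P)" "path_edges P \<subseteq> E - {{u, v}}"
    using P by (auto simp: is_path_def path_edges_Cons)
  moreover have "z \<notin> set P" using P z by (auto simp: is_path_def)
  ultimately show "is_path (insert z V) (subdiv_edges E u v z) (z # P)"
    using P by (auto simp: is_path_def subdiv_edges_def insert_commute)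
  have "{z, hd P} \<notin> path_edges P" using edges(2) new_vertex_notin_edge by blast
  then show "weight (subdiv_weight w u v z a) (path_edges (z # P)) =
     subdiv_weight w u v z a {z, hd P} + weight w (path_edges P)"
    using edges weight_subdiv_old[of "path_edges P" w a] by (auto simp: weight_def)
qed

lemma subdiv_path_lift:
  fixes w :: "'v set \<Rightarrow> real"
  assumes a: "0 \<le> a" and P: "is_path V E P" "hd P = u"
  shows "\<exists>q. is_path (insert z V) (subdiv_edges E u v z) q \<and> hd q = z \<and> last q = last P \<and>
    weight (subdiv_weight w u v z a) (path_edges q) \<le> a + weight w (path_edges P)"
proof (cases "{u, v} \<in> path_edges P")
  case False
  then show ?thesis
    using subdiv_path_prepend(1)[of P] subdiv_path_prepend(2)[of P w a] P subdiv_weight_new(1)[of w a]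
    by (intro exI[of _ "z # P"]) (auto simp: is_path_def)
next
  case True
  \<comment> \<open>\<open>P\<close> begins with \<open>u v\<close>, so the lifted path enters at \<open>v\<close> instead\<close>
  obtain P' where P': "P = u # P'" using P by (cases P) (auto simp: is_path_def)
  then have "P' \<noteq> []" using True by auto
  have "u \<notin> set P'" using P P' by (simp add: is_path_def)
  then have "{u, v} \<notin> path_edges P'" using path_edge_subset_set by blast
  then have "{u, v} = {u, hd P'}" using True P' \<open>P' \<noteq> []\<close> by (simp add: path_edges_Cons)
  then have "hd P' = v" using \<open>u \<notin> set P'\<close> \<open>P' \<noteq> []\<close> hd_in_set[of P']
    by (auto simp: doubleton_eq_iff)
  have "is_path V E P'" using P P' \<open>P' \<noteq> []\<close> by (auto simp: is_path_def path_edges_Cons)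
  note prepend = subdiv_path_prepend[OF this _ \<open>{u, v} \<notin> path_edges P'\<close>]
  have "weight w (path_edges P) = w {u, v} + weight w (path_edges P')"
    using P' \<open>P' \<noteq> []\<close> \<open>{u, v} = {u, hd P'}\<close> \<open>{u, v} \<notin> path_edges P'\<close>
    by (simp add: path_edges_Cons weight_def)
  then show ?thesis
    using prepend(1) prepend(2)[of w a] \<open>hd P' = v\<close> subdiv_weight_new(2)[of w a] a P' \<open>P' \<noteq> []\<close>
    by (intro exI[of _ "z # P'"]) auto
qed

end


lemma subdivided_shortest_path_in_ambit:
  fixes w :: "'v set \<Rightarrow> real"
  assumes wf: "wf_graph V E" and pos: "positive_weights E w" and unam: "unambiguous V E w"
    and greedy: "greedy_cycle_seq E e w Cs"
    and uv: "{u, v} \<in> ambit Cs i" and z: "z \<notin> V" and a: "0 \<le> a" and t: "t \<in> e"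
    and p: "shortest_path (insert z V) (subdiv_edges E u v z) (subdiv_weight w u v z a) z t (z # u # r)"
  shows "path_in (z # u # r) (subdiv_edges (ambit Cs i) u v z)"
proof -
  have uvE: "{u, v} \<in> E" using uv ambit_subset_edges[OF greedy] by blast
  note restrict = subdiv_path_restrict[OF wf uvE z]
  have p_path: "is_path (insert z V) (subdiv_edges E u v z) (z # u # r)" and "last (u # r) = t"
    using p by (simp_all add: shortest_path_def)
  have "path_edges (u # r) \<subseteq> ambit Cs i"
  proof (rule ccontr)
    assume exit: "\<not> path_edges (u # r) \<subseteq> ambit Cs i"
    obtain P' where P': "is_path V E P'" "hd P' = u" "last P' = t"
      "weight w (path_edges P') < weight w (path_edges (u # r))"
      using path_leaving_ambit_shortcut[OF wf pos unam greedy restrict(1)[OF p_path] _ _ exit] uv t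
        \<open>last (u # r) = t\<close> by auto
    then obtain q where "is_path (insert z V) (subdiv_edges E u v z) q" "hd q = z" "last q = t"
      "weight (subdiv_weight w u v z a) (path_edges q) \<le> a + weight w (path_edges P')"
      using subdiv_path_lift[OF wf uvE z a] by metis
    then show False
      using p P'(4) restrict(3)[OF p_path, of w a] by (force simp: shortest_path_def)
  qed
  then have "path_edges (z # u # r) \<subseteq> subdiv_edges (ambit Cs i) u v z"
    using restrict(2)[OF p_path] by (auto simp: subdiv_edges_def insert_commute)
  then show ?thesis by (rule path_in_intro) (auto simp: subdiv_edges_def)
qed


theorem lemma2:
  fixes V :: "'v set" and E :: "'v set set" and w :: "'v set \<Rightarrow> real"
    and t1 t2 :: 'v and Cs :: "'v set set list" and i :: nat
  assumes "wf_graph V E"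
    and "two_connected V E"
    and "positive_weights E w"
    and "unambiguous V E w"
    and "t1 \<noteq> t2" and "{t1, t2} \<in> E"
    and "greedy_cycle_seq E {t1, t2} w Cs"
    and "1 \<le> i" and "i \<le> length Cs"
  shows "(\<forall>x \<in> \<Union>(ambit Cs i). \<forall>t \<in> {t1, t2}. \<forall>p.
            shortest_path V E w x t p \<longrightarrow> path_in p (ambit Cs i))
       \<and> (\<forall>u v z a. {u, v} \<in> ambit Cs i \<and> z \<notin> V \<and> 0 < a \<and> a < w {u, v} \<longrightarrow>
            (\<forall>t \<in> {t1, t2}. \<forall>p.
               shortest_path (insert z V) (subdiv_edges E u v z) (subdiv_weight w u v z a) z t p
               \<longrightarrow> path_in p (subdiv_edges (ambit Cs i) u v z)))"
proof (intro conjI ballI allI impI)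
  note setting = assms(1,3,4,7)
  show "path_in p (ambit Cs i)"
    if "x \<in> \<Union>(ambit Cs i)" "t \<in> {t1, t2}" "shortest_path V E w x t p" for x t p
    using shortest_path_in_ambit[OF setting that] .
  fix u v z a t p
  assume "{u, v} \<in> ambit Cs i \<and> z \<notin> V \<and> 0 < a \<and> a < w {u, v}"
  then have uv: "{u, v} \<in> ambit Cs i" and z: "z \<notin> V" and a: "0 \<le> a" "0 \<le> w {u, v} - a"
    by auto
  assume t: "t \<in> {t1, t2}"
    and p: "shortest_path (insert z V) (subdiv_edges E u v z) (subdiv_weight w u v z a) z t p"
  have uvE: "{u, v} \<in> E" using uv ambit_subset_edges[OF assms(7)] by blast
  have "t \<in> V" using t wf_graph_edge[OF assms(1,6)] by auto
  then obtain c r where p_eq: "p = z # c # r" and c: "c = u \<or> c = v"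
    using subdiv_path_start[OF assms(1) uvE z, of p] p by (auto simp: shortest_path_def)
  from c show "path_in p (subdiv_edges (ambit Cs i) u v z)"
  proof
    assume "c = u"
    then show ?thesis
      using subdivided_shortest_path_in_ambit[OF setting uv z a(1) t] p p_eq by simp
  next
    assume "c = v"
    have "u \<noteq> v" using wf_graph_edge[OF assms(1) uvE] by blast
    then show ?thesis
      using subdivided_shortest_path_in_ambit[OF setting _ z a(2) t, of v u i r] uv p p_eq \<open>c = v\<close>
      by (simp add: subdiv_edges_swap subdiv_weight_swap insert_commute)
  qed
qed

end
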